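(* For every $\omega>0$ there exist $\Gamma>0$ and $N>0$ such that for every $\beta\in(0,1]$ the two-dimensional system $$\dot x=\omega A_0x-\beta\, b_0\frac{b_0^Tx}{(1+\|x\|^2)^{1/2}},\qquad x\in\mathbb{R}^2,$$ is $SISS_L\!\left(\beta\Gamma,\frac{N}{\beta}\right)$, its origin is globally asymptotically stable, and its linearization at $0$ is asymptotically stable.
   Context: $A_0=\begin{pmatrix}0&1\\-1&0\end{pmatrix}$, $b_0=\begin{pmatrix}0\\1\end{pmatrix}$, $\|\cdot\|$ is the Euclidean norm. Eventually bounded: $f:\mathbb{R}_{\ge0}\to\mathbb{R}^k$ is eventually bounded by $\delta$ if there is $T>0$ with $\|f(t)\|\le\delta$ for all $t\ge T$. $SISS_L(\Delta,N)$ for an input-free system $\dot x=f(x)$: for every $\delta\in(0,\Delta]$ and every bounded measurable $e:\mathbb{R}_{\ge0}\to\mathbb{R}^n$ eventually bounded by $\delta$, every solution of $\dot x=f(x)+e(t)$ is eventually bounded by $N\delta$. *)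

theory Defs
  imports "HOL-Analysis.Analysis"
begin

definition eventually_bounded :: "(real \<Rightarrow> 'a::real_normed_vector) \<Rightarrow> real \<Rightarrow> bool" where
  "eventually_bounded g d \<longleftrightarrow> (\<exists>T>0. \<forall>t\<ge>T. norm (g t) \<le> d)"

text \<open>Caratheodory solution on [0,oo) of x' = f x + e t, in integral form.\<close>
definition is_solution ::
  "('a::euclidean_space \<Rightarrow> 'a) \<Rightarrow> (real \<Rightarrow> 'a) \<Rightarrow> (real \<Rightarrow> 'a) \<Rightarrow> bool" where
  "is_solution f e x \<longleftrightarrow> continuous_on {0..} x \<and>
     (\<forall>t\<ge>0. ((\<lambda>s. f (x s) + e s) has_integral (x t - x 0)) {0..t})"

definition SISS_L :: "real \<Rightarrow> real \<Rightarrow> ('a::euclidean_space \<Rightarrow> 'a) \<Rightarrow> bool" where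
  "SISS_L \<Delta> N f \<longleftrightarrow>
     (\<forall>\<delta>. 0 < \<delta> \<and> \<delta> \<le> \<Delta> \<longrightarrow>
       (\<forall>e. set_borel_measurable lborel {0..} e \<and> bounded (e ` {0..}) \<and> eventually_bounded e \<delta> \<longrightarrow>
          (\<forall>x. is_solution f e x \<longrightarrow> eventually_bounded x (N * \<delta>))))"

definition lyap_stable :: "('a::euclidean_space \<Rightarrow> 'a) \<Rightarrow> bool" where
  "lyap_stable f \<longleftrightarrow> f 0 = 0 \<and>
     (\<forall>\<epsilon>>0. \<exists>\<delta>>0. \<forall>x. is_solution f (\<lambda>_. 0) x \<and> norm (x 0) < \<delta> \<longrightarrow> (\<forall>t\<ge>0. norm (x t) < \<epsilon>))"

definition asym_stable :: "('a::euclidean_space \<Rightarrow> 'a) \<Rightarrow> bool" where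
  "asym_stable f \<longleftrightarrow> lyap_stable f \<and>
     (\<exists>r>0. \<forall>x. is_solution f (\<lambda>_. 0) x \<and> norm (x 0) < r \<longrightarrow> (x \<longlongrightarrow> 0) at_top)"

definition glob_asym_stable :: "('a::euclidean_space \<Rightarrow> 'a) \<Rightarrow> bool" where
  "glob_asym_stable f \<longleftrightarrow> lyap_stable f \<and>
     (\<forall>x. is_solution f (\<lambda>_. 0) x \<longrightarrow> (x \<longlongrightarrow> 0) at_top)"

definition A0 :: "real^2^2" where
  "A0 = vector [vector [0, 1], vector [-1, 0]]"

definition b0 :: "real^2" where
  "b0 = vector [0, 1]"

definition sys :: "real \<Rightarrow> real \<Rightarrow> real^2 \<Rightarrow> real^2" where
  "sys \<omega> \<beta> x = \<omega> *\<^sub>R (A0 *v x) - \<beta> *\<^sub>R ((b0 \<bullet> x) / sqrt (1 + (norm x)\<^sup>2)) *\<^sub>R b0"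

end

theory Submission
  imports Defs
begin

text \<open>With \<open>\<rho>(y) = (1 + \<parallel>y\<parallel>\<^sup>2)\<^sup>1\<^sup>/\<^sup>2\<close>, the function \<open>V(y) = \<parallel>y\<parallel>\<^sup>2 + \<kappa> \<beta> y\<^sub>1 y\<^sub>2 / \<rho>(y)\<close> lies between
  \<open>\<parallel>y\<parallel>\<^sup>2 / 2\<close> and \<open>3 \<parallel>y\<parallel>\<^sup>2 / 2\<close>, and along the perturbed system its derivative is at most
  \<open>-(\<kappa> \<omega> / 2) \<beta> \<parallel>y\<parallel>\<^sup>2 / \<rho>(y) + 3 \<parallel>y\<parallel> \<parallel>e\<parallel>\<close>. So \<open>V\<close> decreases as soon as \<open>\<parallel>y\<parallel>\<close> exceeds a
  multiple of \<open>\<parallel>e\<parallel> / \<beta>\<close>, provided \<open>\<parallel>e\<parallel> \<le> \<beta> \<Gamma>\<close>; this gives the practical bound with gain \<open>N / \<beta>\<close>,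
  and with \<open>e = 0\<close> global asymptotic stability. Solutions are only absolutely continuous, so the
  monotonicity of \<open>V\<close> along them is derived from bounds on its upper right Dini derivative.
  The linearization is the same system with the damping factor \<open>1 / \<rho>\<close> replaced by \<open>1\<close>, and
  the whole argument only uses \<open>1 / \<rho> \<le> \<psi> \<le> 1\<close> for the damping factor \<open>\<psi>\<close>.\<close>

definition upper_right_dini_le :: "(real \<Rightarrow> real) \<Rightarrow> real \<Rightarrow> real \<Rightarrow> bool" where
  "upper_right_dini_le \<phi> u c \<longleftrightarrow>
     (\<forall>\<epsilon>>0. \<exists>\<eta>>0. \<forall>t. u < t \<and> t < u + \<eta> \<longrightarrow> \<phi> t \<le> \<phi> u + (c + \<epsilon>) * (t - u))"

lemma upper_right_dini_le_mono:
  assumes "upper_right_dini_le \<phi> u c" and "c \<le> c'"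
  shows "upper_right_dini_le \<phi> u c'"
  unfolding upper_right_dini_le_def
proof (intro allI impI)
  fix \<epsilon> :: real assume "\<epsilon> > 0"
  then obtain \<eta> where "\<eta> > 0" and \<eta>: "\<forall>t. u < t \<and> t < u + \<eta> \<longrightarrow> \<phi> t \<le> \<phi> u + (c + \<epsilon>) * (t - u)"
    using assms(1) by (auto simp: upper_right_dini_le_def)
  moreover have "(c + \<epsilon>) * (t - u) \<le> (c' + \<epsilon>) * (t - u)" if "u < t" for t
    using assms(2) that by (intro mult_right_mono) auto
  ultimately show "\<exists>\<eta>>0. \<forall>t. u < t \<and> t < u + \<eta> \<longrightarrow> \<phi> t \<le> \<phi> u + (c' + \<epsilon>) * (t - u)"
    by (meson order_trans add_left_mono)
qed

lemma upper_right_dini_le_add_linear: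
  assumes "upper_right_dini_le \<phi> u c"
  shows "upper_right_dini_le (\<lambda>t. \<phi> t + m * t) u (c + m)"
  using assms unfolding upper_right_dini_le_def by (simp add: algebra_simps)

lemma nonpos_right_barrier:
  fixes h :: "real \<Rightarrow> real"
  assumes "a \<le> b" and cont: "continuous_on {a..b} h" and "h a \<le> 0"
    and zero: "\<And>u. a \<le> u \<Longrightarrow> u < b \<Longrightarrow> h u = 0 \<Longrightarrow> \<exists>\<eta>>0. \<forall>t. u < t \<and> t < u + \<eta> \<longrightarrow> h t \<le> 0"
  shows "h b \<le> 0"
proof (rule ccontr)
  assume "\<not> h b \<le> 0"
  define S where "S = {s \<in> {a..b}. 0 < h s}"
  define c where "c = Inf S"
  have "b \<in> S" using \<open>\<not> h b \<le> 0\<close> \<open>a \<le> b\<close> by (simp add: S_def)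
  have bdd: "bdd_below S" by (rule bdd_belowI[of _ a]) (auto simp: S_def)
  then have c_le: "s \<in> S \<Longrightarrow> c \<le> s" for s by (simp add: c_def cInf_lower)
  have "a \<le> c" unfolding c_def using \<open>b \<in> S\<close> by (intro cInf_greatest) (auto simp: S_def)
  have "c \<le> b" using c_le[OF \<open>b \<in> S\<close>] .
  have cont_on: "continuous_on (closure T) h" if "T \<subseteq> {a..b}" for T
    using closure_minimal[OF that closed_atLeastAtMost] by (rule continuous_on_subset[OF cont])
  have "S \<subseteq> {a..b}" by (auto simp: S_def)
  text \<open>The infimum of the region where \<open>h\<close> is positive is a zero of \<open>h\<close>.\<close>
  have "c \<in> closure S"
    unfolding c_def using \<open>b \<in> S\<close> by (intro closure_contains_Inf[OF _ bdd]) auto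
  then have "0 \<le> h c"
    by (rule continuous_ge_on_closure[OF cont_on[OF \<open>S \<subseteq> {a..b}\<close>]]) (simp add: S_def)
  moreover have "h c \<le> 0"
  proof (cases "a = c")
    case False
    then have "c \<in> closure {a..<c}" using \<open>a \<le> c\<close> by simp
    moreover have "h r \<le> 0" if "r \<in> {a..<c}" for r
    proof (rule ccontr)
      assume "\<not> h r \<le> 0"
      with that \<open>c \<le> b\<close> have "r \<in> S" by (auto simp: S_def)
      with c_le that show False by fastforce
    qed
    moreover have "{a..<c} \<subseteq> {a..b}" using \<open>c \<le> b\<close> by auto
    ultimately show ?thesis using cont_on continuous_le_on_closure by metis
  qed (use \<open>h a \<le> 0\<close> in simp)
  ultimately have "h c = 0" by simp
  with \<open>b \<in> S\<close> \<open>c \<le> b\<close> have "c < b" by (cases "c = b") (auto simp: S_def)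
  then obtain \<eta> where "\<eta> > 0" and \<eta>: "\<And>t. c < t \<Longrightarrow> t < c + \<eta> \<Longrightarrow> h t \<le> 0"
    using zero[OF \<open>a \<le> c\<close> _ \<open>h c = 0\<close>] by blast
  then obtain s where "s \<in> S" "s < c + \<eta>"
    using cInf_less_iff[OF _ bdd, of "c + \<eta>"] \<open>b \<in> S\<close> by (auto simp: c_def)
  moreover have "c \<noteq> s" using \<open>h c = 0\<close> \<open>s \<in> S\<close> by (auto simp: S_def)
  ultimately have "h s \<le> 0" using c_le[OF \<open>s \<in> S\<close>] by (intro \<eta>) auto
  with \<open>s \<in> S\<close> show False by (simp add: S_def)
qed

lemma upper_right_dini_barrier:
  fixes \<phi> :: "real \<Rightarrow> real"
  assumes "a \<le> b" and cont: "continuous_on {a..b} \<phi>" and "\<phi> a \<le> L"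
    and dini: "\<And>u. a \<le> u \<Longrightarrow> u < b \<Longrightarrow> L \<le> \<phi> u \<Longrightarrow> upper_right_dini_le \<phi> u 0"
  shows "\<phi> b \<le> L"
proof -
  have scaled: "\<phi> b \<le> L + \<epsilon> * (b - a + 1)" if "\<epsilon> > 0" for \<epsilon>
  proof -
    define h where "h t = \<phi> t - L - \<epsilon> * (t - a + 1)" for t
    have "h b \<le> 0"
    proof (rule nonpos_right_barrier[OF \<open>a \<le> b\<close>])
      show "continuous_on {a..b} h" unfolding h_def by (intro continuous_intros cont)
      show "h a \<le> 0" using \<open>\<phi> a \<le> L\<close> \<open>\<epsilon> > 0\<close> by (simp add: h_def)
      fix u assume u: "a \<le> u" "u < b" "h u = 0"
      moreover have "0 \<le> \<epsilon> * (u - a + 1)" using \<open>\<epsilon> > 0\<close> u by simp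
      ultimately have "L \<le> \<phi> u" by (simp add: h_def)
      with dini u obtain \<eta> where "\<eta> > 0"
        and \<eta>: "\<forall>t. u < t \<and> t < u + \<eta> \<longrightarrow> \<phi> t \<le> \<phi> u + (0 + \<epsilon>) * (t - u)"
        using \<open>\<epsilon> > 0\<close> unfolding upper_right_dini_le_def by blast
      then show "\<exists>\<eta>>0. \<forall>t. u < t \<and> t < u + \<eta> \<longrightarrow> h t \<le> 0"
        using \<open>h u = 0\<close> by (intro exI[of _ \<eta>]) (auto simp: h_def algebra_simps)
    qed
    then show ?thesis by (simp add: h_def)
  qed
  then have "\<phi> b \<le> L + \<epsilon>" if "\<epsilon> > 0" for \<epsilon>
    using scaled[of "\<epsilon> / (b - a + 1)"] \<open>a \<le> b\<close> that by simp
  then show ?thesis by (rule field_le_epsilon)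
qed

lemma solution_has_integral_between:
  assumes sol: "is_solution f e x" and "0 \<le> u" "u \<le> t"
  shows "((\<lambda>s. f (x s) + e s) has_integral (x t - x u)) {u..t}"
proof -
  let ?g = "\<lambda>s. f (x s) + e s"
  have to_t: "(?g has_integral (x t - x 0)) {0..t}" and to_u: "(?g has_integral (x u - x 0)) {0..u}"
    using sol assms by (auto simp: is_solution_def)
  have "{u..t} \<subseteq> {0..t}" using assms by auto
  with to_t have "?g integrable_on {u..t}" by (metis has_integral_integrable integrable_subinterval_real)
  then obtain I where I: "(?g has_integral I) {u..t}" by blast
  have "(?g has_integral (x u - x 0) + I) {0..t}"
    using has_integral_combine[OF \<open>0 \<le> u\<close> \<open>u \<le> t\<close> to_u I] .
  then have "I = x t - x u" using has_integral_unique[OF to_t] by (simp add: algebra_simps)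
  with I show ?thesis by simp
qed

text \<open>The vector \<open>v\<close> is the mean value of the perturbation over \<open>[u, t]\<close>.\<close>
lemma solution_increment_approx:
  fixes f :: "'a::euclidean_space \<Rightarrow> 'a"
  assumes sol: "is_solution f e x" and fc: "continuous_on UNIV f" and "0 \<le> u"
    and e_le: "\<And>s. u \<le> s \<Longrightarrow> norm (e s) \<le> \<delta>" and "\<epsilon> > 0"
  shows "\<exists>\<eta>>0. \<forall>t. u < t \<and> t < u + \<eta> \<longrightarrow>
           (\<exists>v. norm v \<le> \<delta> \<and> norm (x t - x u - (t - u) *\<^sub>R (f (x u) + v)) \<le> \<epsilon> * (t - u))"
proof -
  have fx_cont: "continuous_on {0..} (\<lambda>s. f (x s))"
    using sol by (auto simp: is_solution_def intro: continuous_on_compose2[OF fc])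
  then obtain \<eta> where "\<eta> > 0" and \<eta>: "\<And>s. 0 \<le> s \<Longrightarrow> dist s u < \<eta> \<Longrightarrow> dist (f (x s)) (f (x u)) < \<epsilon>"
    using \<open>\<epsilon> > 0\<close> \<open>0 \<le> u\<close> unfolding continuous_on_iff by (metis atLeast_iff)
  show ?thesis
  proof (intro exI[of _ \<eta>] conjI allI impI \<open>\<eta> > 0\<close>)
    fix t assume t: "u < t \<and> t < u + \<eta>"
    have fx_int: "((\<lambda>s. f (x s)) has_integral integral {u..t} (\<lambda>s. f (x s))) {u..t}"
      using \<open>0 \<le> u\<close> by (intro integrable_integral integrable_continuous_real continuous_on_subset[OF fx_cont]) auto
    have "((\<lambda>s. f (x s) + e s) has_integral (x t - x u)) {u..t}"
      using solution_has_integral_between[OF sol \<open>0 \<le> u\<close>] t by simp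
    from has_integral_diff[OF this fx_int]
    have e_int: "(e has_integral (x t - x u - integral {u..t} (\<lambda>s. f (x s)))) {u..t}" by simp
    define w where "w = x t - x u - integral {u..t} (\<lambda>s. f (x s))"
    define v where "v = (1 / (t - u)) *\<^sub>R w"
    have "0 \<le> \<delta>" using e_le[of u] norm_ge_zero order_trans by blast
    have "norm w \<le> \<delta> * Henstock_Kurzweil_Integration.content {u..t}"
      using e_int unfolding w_def by (rule has_integral_bound_real[OF \<open>0 \<le> \<delta>\<close> finite.emptyI]) (simp add: e_le)
    then have "norm w / (t - u) \<le> \<delta>" using t by (simp add: divide_le_eq)
    then have "norm v \<le> \<delta>" using t by (simp add: v_def)
    have "((\<lambda>s. f (x s) - f (x u)) has_integral (x t - x u - (t - u) *\<^sub>R (f (x u) + v))) {u..t}"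
      using has_integral_diff[OF fx_int has_integral_const_real[of "f (x u)" u t]] t
      by (simp add: v_def w_def scaleR_add_right algebra_simps)
    moreover have "norm (f (x s) - f (x u)) \<le> \<epsilon>" if "s \<in> {u..t}" for s
      using \<eta>[of s] that t \<open>0 \<le> u\<close> by (simp add: dist_norm dist_real_def)
    ultimately have "norm (x t - x u - (t - u) *\<^sub>R (f (x u) + v)) \<le> \<epsilon> * Henstock_Kurzweil_Integration.content {u..t}"
      using \<open>\<epsilon> > 0\<close> by (intro has_integral_bound_real[where S = "{}"]) auto
    then have "norm (x t - x u - (t - u) *\<^sub>R (f (x u) + v)) \<le> \<epsilon> * (t - u)" using t by simp
    with \<open>norm v \<le> \<delta>\<close> show "\<exists>v. norm v \<le> \<delta> \<and> norm (x t - x u - (t - u) *\<^sub>R (f (x u) + v)) \<le> \<epsilon> * (t - u)"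
      by blast
  qed
qed

lemma has_derivative_upper_increment:
  fixes U :: "'a::real_normed_vector \<Rightarrow> real"
  assumes "(U has_derivative DU) (at y)" and "\<epsilon> > 0"
  shows "\<exists>d>0. \<forall>z. norm (z - y) < d \<longrightarrow> U z \<le> U y + DU (z - y) + \<epsilon> * norm (z - y)"
proof -
  obtain d where "d > 0" and d: "\<And>z. norm (z - y) < d \<Longrightarrow> norm (U z - U y - DU (z - y)) \<le> \<epsilon> * norm (z - y)"
    using assms unfolding has_derivative_at_alt by blast
  have "U z \<le> U y + DU (z - y) + \<epsilon> * norm (z - y)" if "norm (z - y) < d" for z
    using d[OF that] by simp
  with \<open>d > 0\<close> show ?thesis by blast
qed

lemma upper_right_dini_le_comp:
  fixes g :: "real \<Rightarrow> 'a::real_normed_vector" and U :: "'a \<Rightarrow> real"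
  assumes U: "(U has_derivative DU) (at (g u))" and "0 \<le> M"
    and approx: "\<And>\<epsilon>. \<epsilon> > 0 \<Longrightarrow> \<exists>\<eta>>0. \<forall>t. u < t \<and> t < u + \<eta> \<longrightarrow>
       (\<exists>w. norm w \<le> M \<and> DU w \<le> B \<and> norm (g t - g u - (t - u) *\<^sub>R w) \<le> \<epsilon> * (t - u))"
  shows "upper_right_dini_le (\<lambda>t. U (g t)) u B"
  unfolding upper_right_dini_le_def
proof (intro allI impI)
  fix \<epsilon> :: real assume "\<epsilon> > 0"
  have lin: "bounded_linear DU" using U by (rule has_derivative_bounded_linear)
  then obtain K where "K > 0" and K: "\<And>z. norm (DU z) \<le> norm z * K"
    using bounded_linear.pos_bounded by blast
  define \<epsilon>' where "\<epsilon>' = min 1 (\<epsilon> / (2 * K))"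
  have "\<epsilon>' > 0" "\<epsilon>' \<le> 1" "K * \<epsilon>' \<le> \<epsilon> / 2"
    using \<open>\<epsilon> > 0\<close> \<open>K > 0\<close> mult_left_mono[of \<epsilon>' "\<epsilon> / (2 * K)" K] by (simp_all add: \<epsilon>'_def)
  obtain \<eta> where "\<eta> > 0" and \<eta>: "\<And>t. u < t \<Longrightarrow> t < u + \<eta> \<Longrightarrow>
      \<exists>w. norm w \<le> M \<and> DU w \<le> B \<and> norm (g t - g u - (t - u) *\<^sub>R w) \<le> \<epsilon>' * (t - u)"
    using approx[OF \<open>\<epsilon>' > 0\<close>] by blast
  obtain d where "d > 0" and d: "\<And>z. norm (z - g u) < d \<Longrightarrow>
      U z \<le> U (g u) + DU (z - g u) + \<epsilon> / (2 * (M + 1)) * norm (z - g u)"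
    using has_derivative_upper_increment[OF U, of "\<epsilon> / (2 * (M + 1))"] \<open>\<epsilon> > 0\<close> \<open>0 \<le> M\<close> by auto
  show "\<exists>\<eta>>0. \<forall>t. u < t \<and> t < u + \<eta> \<longrightarrow> U (g t) \<le> U (g u) + (B + \<epsilon>) * (t - u)"
  proof (intro exI[of _ "min \<eta> (d / (M + 1))"] conjI allI impI)
    show "min \<eta> (d / (M + 1)) > 0" using \<open>\<eta> > 0\<close> \<open>d > 0\<close> \<open>0 \<le> M\<close> by simp
    fix t assume t: "u < t \<and> t < u + min \<eta> (d / (M + 1))"
    then have "t - u < min \<eta> (d / (M + 1))" by linarith
    then have "t < u + \<eta>" and "(M + 1) * (t - u) < d"
      using \<open>0 \<le> M\<close> by (simp_all add: pos_less_divide_eq mult.commute)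
    then obtain w where "norm w \<le> M" "DU w \<le> B" and r: "norm (g t - g u - (t - u) *\<^sub>R w) \<le> \<epsilon>' * (t - u)"
      using \<eta> t by blast
    define r where "r = g t - g u - (t - u) *\<^sub>R w"
    have step: "g t - g u = (t - u) *\<^sub>R w + r" by (simp add: r_def)
    have "DU r \<le> norm r * K" using K[of r] by simp
    also have "\<dots> \<le> (\<epsilon>' * K) * (t - u)" using r \<open>K > 0\<close> by (simp add: r_def mult_ac)
    also have "\<dots> \<le> \<epsilon> / 2 * (t - u)"
      using \<open>K * \<epsilon>' \<le> \<epsilon> / 2\<close> t by (intro mult_right_mono) (simp_all add: mult.commute)
    finally have "DU r \<le> \<epsilon> / 2 * (t - u)" .
    moreover have "DU (g t - g u) = (t - u) * DU w + DU r"
      unfolding step by (simp add: linear_add linear_scale bounded_linear.linear[OF lin])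
    moreover have "(t - u) * DU w \<le> (t - u) * B" using \<open>DU w \<le> B\<close> t by simp
    ultimately have DU_le: "DU (g t - g u) \<le> (t - u) * B + \<epsilon> / 2 * (t - u)" by linarith
    have "norm (g t - g u) \<le> (t - u) * norm w + \<epsilon>' * (t - u)"
      using norm_triangle_ineq[of "(t - u) *\<^sub>R w" r] r t unfolding step by (simp add: r_def)
    also have "\<dots> \<le> (M + 1) * (t - u)"
      using t \<open>norm w \<le> M\<close> \<open>\<epsilon>' \<le> 1\<close> mult_left_mono[of "norm w" M "t - u"] mult_right_mono[of \<epsilon>' 1 "t - u"]
      by (simp add: algebra_simps)
    finally have small: "norm (g t - g u) \<le> (M + 1) * (t - u)" .
    then have "U (g t) \<le> U (g u) + DU (g t - g u) + \<epsilon> / (2 * (M + 1)) * norm (g t - g u)"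
      using \<open>(M + 1) * (t - u) < d\<close> by (intro d) simp
    also have "\<epsilon> / (2 * (M + 1)) * norm (g t - g u) \<le> \<epsilon> / (2 * (M + 1)) * ((M + 1) * (t - u))"
      using small \<open>\<epsilon> > 0\<close> \<open>0 \<le> M\<close> by (intro mult_left_mono) auto
    also have "\<dots> = \<epsilon> / 2 * (t - u)" using \<open>0 \<le> M\<close> by (simp add: field_simps)
    finally have "U (g t) \<le> U (g u) + DU (g t - g u) + \<epsilon> / 2 * (t - u)" by simp
    also have "\<dots> \<le> U (g u) + ((t - u) * B + \<epsilon> / 2 * (t - u)) + \<epsilon> / 2 * (t - u)"
      using DU_le by simp
    also have "\<dots> = U (g u) + (B + \<epsilon>) * (t - u)" by (simp add: algebra_simps)
    finally show "U (g t) \<le> U (g u) + (B + \<epsilon>) * (t - u)" .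
  qed
qed

lemma solution_upper_right_dini:
  fixes f :: "'a::euclidean_space \<Rightarrow> 'a" and U :: "'a \<Rightarrow> real"
  assumes sol: "is_solution f e x" and fc: "continuous_on UNIV f" and "0 \<le> u"
    and e_le: "\<And>s. u \<le> s \<Longrightarrow> norm (e s) \<le> \<delta>"
    and U: "(U has_derivative DU) (at (x u))"
    and DU_le: "\<And>v. norm v \<le> \<delta> \<Longrightarrow> DU (f (x u) + v) \<le> B"
  shows "upper_right_dini_le (\<lambda>t. U (x t)) u B"
proof (rule upper_right_dini_le_comp[where g = x and M = "norm (f (x u)) + \<delta>", OF U])
  show "0 \<le> norm (f (x u)) + \<delta>" using e_le[of u] norm_ge_zero[of "e u"] norm_ge_zero[of "f (x u)"] by linarith
  fix \<epsilon> :: real assume "\<epsilon> > 0"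
  with solution_increment_approx[OF sol fc \<open>0 \<le> u\<close> e_le] obtain \<eta> where "\<eta> > 0"
    and \<eta>: "\<forall>t. u < t \<and> t < u + \<eta> \<longrightarrow>
       (\<exists>v. norm v \<le> \<delta> \<and> norm (x t - x u - (t - u) *\<^sub>R (f (x u) + v)) \<le> \<epsilon> * (t - u))"
    by blast
  have "norm (f (x u) + v) \<le> norm (f (x u)) + \<delta>" if "norm v \<le> \<delta>" for v
    using norm_triangle_ineq[of "f (x u)" v] that by linarith
  with \<eta> DU_le \<open>\<eta> > 0\<close>
  show "\<exists>\<eta>>0. \<forall>t. u < t \<and> t < u + \<eta> \<longrightarrow> (\<exists>w. norm w \<le> norm (f (x u)) + \<delta> \<and> DU w \<le> B \<and>
      norm (x t - x u - (t - u) *\<^sub>R w) \<le> \<epsilon> * (t - u))"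
    by blast
qed

lemma eventually_below_level:
  fixes W :: "real \<Rightarrow> real"
  assumes cont: "continuous_on {T..} W" and nonneg: "\<And>t. T \<le> t \<Longrightarrow> 0 \<le> W t" and "m > 0"
    and dini: "\<And>u. T \<le> u \<Longrightarrow> L \<le> W u \<Longrightarrow> upper_right_dini_le W u (- m)"
  shows "\<exists>t\<^sub>1\<ge>T. \<forall>t\<ge>t\<^sub>1. W t \<le> L"
proof -
  have cont_on: "continuous_on {a..b} W" if "T \<le> a" for a b
    using that by (intro continuous_on_subset[OF cont]) auto
  text \<open>Above the level \<open>L\<close>, \<open>W\<close> decreases at rate \<open>m\<close>, so it cannot stay above it
    longer than \<open>W T / m\<close>.\<close>
  have "\<exists>t\<^sub>1\<ge>T. W t\<^sub>1 \<le> L"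
  proof (rule ccontr)
    assume "\<not> (\<exists>t\<^sub>1\<ge>T. W t\<^sub>1 \<le> L)"
    then have above: "L \<le> W t" if "T \<le> t" for t using that by force
    define b where "b = T + W T / m + 1"
    have "T \<le> b" using nonneg[of T] \<open>m > 0\<close> by (simp add: b_def)
    have "W b + m * b \<le> W T + m * T"
    proof (rule upper_right_dini_barrier[OF \<open>T \<le> b\<close>])
      show "continuous_on {T..b} (\<lambda>t. W t + m * t)" by (intro continuous_intros cont_on) simp
      fix u assume "T \<le> u"
      from upper_right_dini_le_add_linear[OF dini[OF this above[OF this]], of m]
      show "upper_right_dini_le (\<lambda>t. W t + m * t) u 0" by simp
    qed simp
    moreover have "m * (b - T) = W T + m" using \<open>m > 0\<close> by (simp add: b_def field_simps)
    ultimately have "W b \<le> - m" by (simp add: algebra_simps)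
    with nonneg[OF \<open>T \<le> b\<close>] \<open>m > 0\<close> show False by simp
  qed
  then obtain t\<^sub>1 where "T \<le> t\<^sub>1" "W t\<^sub>1 \<le> L" by blast
  have "W t \<le> L" if "t\<^sub>1 \<le> t" for t
  proof (rule upper_right_dini_barrier[OF that cont_on \<open>W t\<^sub>1 \<le> L\<close>])
    show "T \<le> t\<^sub>1" by fact
    fix u assume "t\<^sub>1 \<le> u" "L \<le> W u"
    with \<open>T \<le> t\<^sub>1\<close> \<open>m > 0\<close> show "upper_right_dini_le W u 0"
      by (intro upper_right_dini_le_mono[OF dini]) auto
  qed
  with \<open>T \<le> t\<^sub>1\<close> show ?thesis by blast
qed

lemma abs_mult_le_weighted_squares:
  fixes a b w :: real
  assumes "w > 0"
  shows "\<bar>a * b\<bar> \<le> w * a^2 / 2 + b^2 / (2 * w)"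
proof -
  have "0 \<le> (w * \<bar>a\<bar> - \<bar>b\<bar>)^2" by simp
  then have "2 * w * \<bar>a * b\<bar> \<le> w^2 * a^2 + b^2"
    by (simp add: power2_eq_square algebra_simps abs_mult)
  then show ?thesis using assms by (simp add: field_simps power2_eq_square)
qed

lemma abs_sum_mult2_le:
  fixes a b c d :: real
  shows "\<bar>a * c + b * d\<bar> \<le> sqrt (a^2 + b^2) * sqrt (c^2 + d^2)"
proof -
  have "0 \<le> (a * d - b * c)^2" by simp
  then have "(a * c + b * d)^2 \<le> (a^2 + b^2) * (c^2 + d^2)"
    by (simp add: power2_eq_square algebra_simps)
  then show ?thesis by (metis real_sqrt_abs real_sqrt_le_mono real_sqrt_mult)
qed

lemma norm_vec2_sq: "(norm (y :: real^2))^2 = (y$1)^2 + (y$2)^2"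
  by (simp add: norm_vec_def L2_set_def sum_2 add_nonneg_nonneg)

lemma norm_vec2: "norm (y :: real^2) = sqrt ((y$1)^2 + (y$2)^2)"
  by (metis norm_vec2_sq norm_ge_zero real_sqrt_unique)

definition rho :: "real^2 \<Rightarrow> real" where
  "rho y = sqrt (1 + (y$1)^2 + (y$2)^2)"

lemma rho_sq: "(rho y)^2 = 1 + (y$1)^2 + (y$2)^2"
  unfolding rho_def by (simp add: add_nonneg_nonneg)

lemma rho_ge_1: "1 \<le> rho y"
  unfolding rho_def by (simp add: add_nonneg_nonneg)

lemma rho_pos: "0 < rho y"
  using rho_ge_1[of y] by simp

lemma rho_eq_norm: "rho y = sqrt (1 + (norm y)^2)"
  by (simp add: rho_def norm_vec2_sq add.assoc)

lemma rho_has_derivative: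
  "(rho has_derivative (\<lambda>h. (z$1 * h$1 + z$2 * h$2) / rho z)) (at z)"
proof -
  have pos: "0 < 1 + (z$1)^2 + (z$2)^2" by (simp add: add_pos_nonneg)
  have vec_nth: "((\<lambda>x::real^2. x$i) has_derivative (\<lambda>h. h$i)) (at z)" for i
    by (simp add: bounded_linear_vec_nth bounded_linear_imp_has_derivative)
  show ?thesis unfolding rho_def
    by (rule derivative_eq_intros refl pos vec_nth)+ (use pos in \<open>auto simp: field_simps power2_eq_square\<close>)
qed

lemma abs_nth_mult_le_rho_cube: "\<bar>y$1 * y$2\<bar> \<le> (rho y)^3 / 2"
proof -
  have "\<bar>y$1 * y$2\<bar> \<le> (rho y)^2 / 2"
    using abs_mult_le_weighted_squares[of 1 "y$1" "y$2"] rho_sq[of y] by simp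
  also have "\<dots> \<le> (rho y)^3 / 2" using rho_ge_1[of y] by (simp add: power_increasing)
  finally show ?thesis .
qed

text \<open>The bounded cross term supplies the decay in the undamped direction \<open>y\<^sub>1\<close>.\<close>
definition lyapunov :: "real \<Rightarrow> real^2 \<Rightarrow> real" where
  "lyapunov k y = (y$1)^2 + (y$2)^2 + k * (y$1 * y$2 / rho y)"

definition lyapunov_deriv :: "real \<Rightarrow> real^2 \<Rightarrow> real^2 \<Rightarrow> real" where
  "lyapunov_deriv k y h = 2 * (y$1 * h$1 + y$2 * h$2)
     + k * ((h$1 * y$2 + y$1 * h$2) / rho y - y$1 * y$2 * (y$1 * h$1 + y$2 * h$2) / (rho y)^3)"

lemma lyapunov_has_derivative: "(lyapunov k has_derivative lyapunov_deriv k y) (at y)"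
proof -
  have vec_nth: "((\<lambda>x::real^2. x$i) has_derivative (\<lambda>h. h$i)) (at y)" for i
    by (simp add: bounded_linear_vec_nth bounded_linear_imp_has_derivative)
  show ?thesis
    unfolding lyapunov_def[abs_def] lyapunov_deriv_def
    by (rule derivative_eq_intros refl vec_nth rho_has_derivative)+
       (use rho_pos[of y] in \<open>auto simp: field_simps power3_eq_cube power2_eq_square\<close>)
qed

lemma continuous_on_lyapunov: "continuous_on S (lyapunov k)"
  by (meson lyapunov_has_derivative has_derivative_continuous continuous_at_imp_continuous_on)

lemma lyapunov_bounds:
  assumes "0 \<le> k" "k \<le> 1/2"
  shows "(norm y)^2 / 2 \<le> lyapunov k y" "lyapunov k y \<le> 3 * (norm y)^2 / 2"
proof -
  define a b where "a = y$1" and "b = y$2"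
  have "\<bar>k * (a * b / rho y)\<bar> = k * (\<bar>a * b\<bar> / rho y)"
    using assms rho_pos[of y] by (simp add: abs_mult)
  also have "\<dots> \<le> 1 * \<bar>a * b\<bar>"
    using assms rho_ge_1[of y] mult_left_mono[of 1 "rho y" "\<bar>a * b\<bar>"]
    by (intro mult_mono) (auto simp: divide_le_eq)
  also have "\<dots> \<le> (a^2 + b^2) / 2"
    using abs_mult_le_weighted_squares[of 1 a b] by simp
  finally have cross: "\<bar>k * (a * b / rho y)\<bar> \<le> (a^2 + b^2) / 2" .
  have split: "S / 2 \<le> S + K \<and> S + K \<le> 3 * S / 2" if "\<bar>K\<bar> \<le> S / 2" for S K :: real
    using abs_le_D1[OF that] abs_le_D2[OF that] by auto
  have "lyapunov k y = (a^2 + b^2) + k * (a * b / rho y)" "(norm y)^2 = a^2 + b^2"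
    by (simp_all add: lyapunov_def norm_vec2_sq a_def b_def)
  with split[OF cross]
  show "(norm y)^2 / 2 \<le> lyapunov k y" "lyapunov k y \<le> 3 * (norm y)^2 / 2"
    by simp_all
qed

lemma abs_lyapunov_deriv_le:
  assumes "0 \<le> k" "k \<le> 1/2"
  shows "\<bar>lyapunov_deriv k y w\<bar> \<le> 3 * norm y * norm w"
proof -
  define r where "r = rho y"
  have "1 \<le> r" by (simp add: r_def rho_ge_1)
  define nm where "nm = norm y * norm w"
  have "0 \<le> nm" by (simp add: nm_def)
  have inner: "\<bar>y$1 * w$1 + y$2 * w$2\<bar> \<le> nm"
    using abs_sum_mult2_le[of "y$1" "w$1" "y$2" "w$2"] by (simp add: nm_def norm_vec2)
  have cross: "\<bar>(w$1 * y$2 + y$1 * w$2) / r\<bar> \<le> nm"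
  proof -
    have "\<bar>w$1 * y$2 + y$1 * w$2\<bar> \<le> nm"
      using abs_sum_mult2_le[of "y$2" "w$1" "y$1" "w$2"] by (simp add: nm_def norm_vec2 algebra_simps)
    then show ?thesis
      using \<open>1 \<le> r\<close> mult_left_mono[of 1 r nm] \<open>0 \<le> nm\<close> by (simp add: divide_le_eq)
  qed
  have "\<bar>y$1 * y$2\<bar> / r^3 \<le> 1/2"
    using abs_nth_mult_le_rho_cube[of y] \<open>1 \<le> r\<close> by (simp add: r_def divide_le_eq)
  moreover have "\<bar>y$1 * y$2 * (y$1 * w$1 + y$2 * w$2) / r^3\<bar>
      = \<bar>y$1 * y$2\<bar> / r^3 * \<bar>y$1 * w$1 + y$2 * w$2\<bar>"
    using \<open>1 \<le> r\<close> by (simp add: abs_mult)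
  ultimately have curv: "\<bar>y$1 * y$2 * (y$1 * w$1 + y$2 * w$2) / r^3\<bar> \<le> 1/2 * nm"
    using inner by (metis abs_ge_zero mult_mono zero_le_divide_1_iff zero_le_numeral)
  have triangle: "\<bar>2 * X + k * (Y - Z)\<bar> \<le> 2 * \<bar>X\<bar> + k * (\<bar>Y\<bar> + \<bar>Z\<bar>)" for X Y Z :: real
  proof -
    have "\<bar>2 * X + k * (Y - Z)\<bar> \<le> 2 * \<bar>X\<bar> + k * \<bar>Y - Z\<bar>"
      using abs_triangle_ineq[of "2 * X" "k * (Y - Z)"] assms by (simp add: abs_mult)
    also have "\<dots> \<le> 2 * \<bar>X\<bar> + k * (\<bar>Y\<bar> + \<bar>Z\<bar>)"
      using assms abs_triangle_ineq4[of Y Z] by (simp add: mult_left_mono)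
    finally show ?thesis .
  qed
  have "\<bar>lyapunov_deriv k y w\<bar>
      \<le> 2 * \<bar>y$1 * w$1 + y$2 * w$2\<bar> + k * (\<bar>(w$1 * y$2 + y$1 * w$2) / r\<bar>
           + \<bar>y$1 * y$2 * (y$1 * w$1 + y$2 * w$2) / r^3\<bar>)"
    unfolding lyapunov_deriv_def r_def[symmetric] by (rule triangle)
  also have "\<dots> \<le> 2 * nm + (1/2) * (nm + nm / 2)"
    using inner cross curv assms by (intro add_mono mult_mono) auto
  also have "\<dots> \<le> 3 * nm" using \<open>0 \<le> nm\<close> by simp
  finally show ?thesis by (simp add: nm_def)
qed

definition lyapunov_weight :: "real \<Rightarrow> real" where
  "lyapunov_weight \<omega> = min (1 / (2 * \<omega>)) (\<omega> / 2)"

definition decay_rate :: "real \<Rightarrow> real" where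
  "decay_rate \<omega> = lyapunov_weight \<omega> * \<omega> / 2"

lemma lyapunov_weight:
  assumes "\<omega> > 0"
  shows "0 < lyapunov_weight \<omega>" "lyapunov_weight \<omega> * \<omega> \<le> 1/2"
    "lyapunov_weight \<omega> \<le> \<omega> / 2" "lyapunov_weight \<omega> \<le> 1/2"
proof -
  let ?\<kappa> = "lyapunov_weight \<omega>"
  show "0 < ?\<kappa>" "?\<kappa> \<le> \<omega> / 2" using assms by (simp_all add: lyapunov_weight_def)
  have "?\<kappa> \<le> 1 / (2 * \<omega>)" by (simp add: lyapunov_weight_def)
  then show "?\<kappa> * \<omega> \<le> 1/2" using assms by (simp add: field_simps)
  show "?\<kappa> \<le> 1/2"
  proof (cases "\<omega> \<le> 1")
    case False
    then have "1 / (2 * \<omega>) \<le> 1/2" by (simp add: field_simps)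
    with \<open>?\<kappa> \<le> 1 / (2 * \<omega>)\<close> show ?thesis by linarith
  qed (use \<open>?\<kappa> \<le> \<omega> / 2\<close> in linarith)
qed

lemma decay_rate_pos: "\<omega> > 0 \<Longrightarrow> decay_rate \<omega> > 0"
  using lyapunov_weight(1) by (simp add: decay_rate_def)

lemma rotation_decay_quadratic_le:
  fixes a b \<kappa> \<omega> :: real
  assumes "\<omega> > 0" "\<kappa> > 0" "\<kappa> * \<omega> \<le> 1/2" "\<kappa> \<le> \<omega> / 2"
  shows "- 2 * b^2 + \<kappa> * \<omega> * (b^2 - a^2) + \<kappa> * (\<omega> * a^2 / 2 + b^2 / (2 * \<omega>))
           \<le> - (\<kappa> * \<omega> / 2) * (a^2 + b^2)"
proof -
  define X Y Z B where "X = \<kappa> * (b^2 / (2 * \<omega>))" and "Y = \<kappa> * \<omega> * b^2"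
    and "Z = \<kappa> * \<omega> * a^2" and "B = b^2"
  have "\<kappa> / (2 * \<omega>) \<le> 1/4" using assms by (simp add: field_simps)
  then have "X \<le> B / 4"
    using mult_right_mono[of "\<kappa> / (2 * \<omega>)" "1/4" "b^2"] by (simp add: X_def B_def)
  moreover have "Y \<le> B / 2"
    using mult_right_mono[OF assms(3), of "b^2"] by (simp add: Y_def B_def)
  moreover have "0 \<le> B" by (simp add: B_def)
  moreover have "- 2 * b^2 + \<kappa> * \<omega> * (b^2 - a^2) + \<kappa> * (\<omega> * a^2 / 2 + b^2 / (2 * \<omega>))
      = - 2 * B + Y - Z / 2 + X" "- (\<kappa> * \<omega> / 2) * (a^2 + b^2) = - Z / 2 - Y / 2"
    by (simp_all add: X_def Y_def Z_def B_def algebra_simps)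
  ultimately show ?thesis by linarith
qed

lemma damped_cross_term_le:
  fixes a b r \<psi> \<beta> \<omega> :: real
  assumes "\<omega> > 0" "0 < \<beta>" "\<beta> \<le> 1" "0 < \<psi>" "\<psi> \<le> 1" "0 < r" "b^2 \<le> r^2"
  shows "- (\<beta> * (\<psi> * (a * b) * (1 - b^2 / r^2))) \<le> \<omega> * a^2 / 2 + b^2 / (2 * \<omega>)"
proof -
  have "0 \<le> 1 - b^2 / r^2" "1 - b^2 / r^2 \<le> 1" using assms by simp_all
  then have "\<bar>\<psi> * (a * b) * (1 - b^2 / r^2)\<bar> \<le> 1 * \<bar>a * b\<bar> * 1"
    unfolding abs_mult using assms by (intro mult_mono) auto
  then show ?thesis
    using abs_mult_le_weighted_squares[OF \<open>\<omega> > 0\<close>, of a b] assms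
      mult_left_le_one_le[of "\<bar>\<psi> * (a * b) * (1 - b^2 / r^2)\<bar>" \<beta>] abs_mult[of \<beta>]
    by (smt (verit) abs_ge_minus_self)
qed

text \<open>The damping term \<open>-2 \<beta> \<psi> y\<^sub>2\<^sup>2\<close> only controls \<open>y\<^sub>2\<close>; the cross term contributes
  \<open>\<kappa> \<beta> \<omega> (y\<^sub>2\<^sup>2 - y\<^sub>1\<^sup>2) / \<rho>\<close>, which controls \<open>y\<^sub>1\<close>.\<close>
lemma lyapunov_deriv_damped_rotation_le:
  fixes y h :: "real^2"
  assumes "\<omega> > 0" "0 < \<beta>" "\<beta> \<le> 1" and \<psi>: "1 / rho y \<le> \<psi>" "\<psi> \<le> 1"
    and \<kappa>: "\<kappa> > 0" "\<kappa> * \<omega> \<le> 1/2" "\<kappa> \<le> \<omega> / 2"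
    and h: "h$1 = \<omega> * y$2" "h$2 = - \<omega> * y$1 - \<beta> * \<psi> * y$2"
  shows "lyapunov_deriv (\<kappa> * \<beta>) y h \<le> - (\<kappa> * \<omega> / 2) * \<beta> * (norm y)^2 / rho y"
proof -
  define a b r where "a = y$1" and "b = y$2" and "r = rho y"
  have "0 < r" "r^2 = 1 + a^2 + b^2" by (simp_all add: r_def a_def b_def rho_pos rho_sq)
  have "0 < \<psi>" using \<psi>(1) \<open>0 < r\<close> by (simp add: r_def) (meson less_le_trans zero_less_divide_1_iff)
  have r3: "r^3 = r * r^2" by (simp add: power2_eq_square power3_eq_cube)
  have deriv: "lyapunov_deriv (\<kappa> * \<beta>) y h
      = - 2 * \<beta> * \<psi> * b^2 + \<kappa> * \<beta> * \<omega> * (b^2 - a^2) / r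
        - \<kappa> * \<beta> * (\<beta> * (\<psi> * (a * b) * (1 - b^2 / r^2))) / r"
    using \<open>0 < r\<close> unfolding lyapunov_deriv_def h a_def[symmetric] b_def[symmetric] r_def[symmetric]
    by (simp add: r3 field_simps power2_eq_square)
  have "\<beta> * b^2 / r \<le> \<beta> * b^2 * \<psi>"
    using \<psi>(1) \<open>0 < \<beta>\<close> \<open>0 < r\<close> mult_left_mono[of "1 / r" \<psi> "\<beta> * b^2"] by (simp add: r_def)
  moreover have "- 2 * \<beta> * \<psi> * b^2 = - 2 * (\<beta> * b^2 * \<psi>)" "- 2 * \<beta> * b^2 / r = - 2 * (\<beta> * b^2 / r)"
    by simp_all
  ultimately have damping: "- 2 * \<beta> * \<psi> * b^2 \<le> - 2 * \<beta> * b^2 / r" by linarith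
  have "b^2 \<le> r^2" using \<open>r^2 = 1 + a^2 + b^2\<close> by simp
  with \<open>0 < r\<close> \<open>0 < \<psi>\<close> \<psi>(2) have "- (\<beta> * (\<psi> * (a * b) * (1 - b^2 / r^2))) \<le> \<omega> * a^2 / 2 + b^2 / (2 * \<omega>)"
    by (intro damped_cross_term_le assms)
  then have "\<kappa> * \<beta> * (- (\<beta> * (\<psi> * (a * b) * (1 - b^2 / r^2))))
      \<le> \<kappa> * \<beta> * (\<omega> * a^2 / 2 + b^2 / (2 * \<omega>))"
    using \<kappa>(1) \<open>0 < \<beta>\<close> by (intro mult_left_mono) auto
  then have coupling: "- \<kappa> * \<beta> * (\<beta> * (\<psi> * (a * b) * (1 - b^2 / r^2))) / r
      \<le> \<kappa> * \<beta> * (\<omega> * a^2 / 2 + b^2 / (2 * \<omega>)) / r"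
    using divide_right_mono[of _ _ r] \<open>0 < r\<close> by fastforce
  have "- 2 * \<beta> * b^2 / r + \<kappa> * \<beta> * \<omega> * (b^2 - a^2) / r + \<kappa> * \<beta> * (\<omega> * a^2 / 2 + b^2 / (2 * \<omega>)) / r
      = (\<beta> / r) * (- 2 * b^2 + \<kappa> * \<omega> * (b^2 - a^2) + \<kappa> * (\<omega> * a^2 / 2 + b^2 / (2 * \<omega>)))"
    using \<open>\<omega> > 0\<close> \<open>0 < r\<close> by (simp add: field_simps)
  also have "\<dots> \<le> (\<beta> / r) * (- (\<kappa> * \<omega> / 2) * (a^2 + b^2))"
    using rotation_decay_quadratic_le[OF \<open>\<omega> > 0\<close> \<kappa>] \<open>0 < \<beta>\<close> \<open>0 < r\<close> by (intro mult_left_mono) auto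
  also have "\<dots> = - (\<kappa> * \<omega> / 2) * \<beta> * (norm y)^2 / rho y"
    by (simp add: norm_vec2_sq a_def b_def r_def field_simps)
  finally show ?thesis using deriv damping coupling by linarith
qed

lemma dissipation_dominates_perturbation:
  fixes P \<delta> n r :: real
  assumes "0 < \<delta>" "12 * \<delta> \<le> P" "12 * \<delta> \<le> P * n" "0 \<le> n" "0 < r" "r^2 = 1 + n^2"
  shows "- P * n^2 / r + 3 * n * \<delta> \<le> - 3 * \<delta> * n"
proof -
  have "r^2 \<le> (1 + n)^2" using \<open>r^2 = 1 + n^2\<close> \<open>0 \<le> n\<close> by (simp add: power2_sum)
  then have "r \<le> 1 + n" by (rule power2_le_imp_le) (use \<open>0 \<le> n\<close> in simp)
  then have "6 * \<delta> * r \<le> 6 * \<delta> * (1 + n)" using \<open>0 < \<delta>\<close> by (intro mult_left_mono) auto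
  also have "\<dots> = 6 * \<delta> + 6 * \<delta> * n" by (simp add: algebra_simps)
  also have "\<dots> \<le> P * n"
    using assms(2,3) mult_right_mono[OF assms(2,4)] by linarith
  finally have "6 * \<delta> * r * n \<le> P * n * n" using \<open>0 \<le> n\<close> by (intro mult_right_mono)
  then have "6 * \<delta> * n * r \<le> P * n^2" by (simp add: power2_eq_square mult_ac)
  then have "6 * (\<delta> * n) \<le> P * n^2 / r" by (simp add: pos_le_divide_eq[OF \<open>0 < r\<close>] mult_ac)
  moreover have "- P * n^2 / r = - (P * n^2 / r)" "3 * n * \<delta> = 3 * (\<delta> * n)" "- 3 * \<delta> * n = - 3 * (\<delta> * n)"
    by simp_all
  ultimately show ?thesis by linarith
qed

locale damped_rotation =
  fixes \<omega> \<beta> :: real and \<psi> :: "real^2 \<Rightarrow> real" and f :: "real^2 \<Rightarrow> real^2"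
  assumes \<omega>_pos: "\<omega> > 0" and \<beta>: "0 < \<beta>" "\<beta> \<le> 1"
    and \<psi>: "\<And>y. 1 / rho y \<le> \<psi> y" "\<And>y. \<psi> y \<le> 1"
    and f_nth: "\<And>y. f y $ 1 = \<omega> * y$2" "\<And>y. f y $ 2 = - \<omega> * y$1 - \<beta> * \<psi> y * y$2"
    and f_cont: "continuous_on UNIV f"
begin

abbreviation V :: "real^2 \<Rightarrow> real" where
  "V \<equiv> lyapunov (lyapunov_weight \<omega> * \<beta>)"

lemma V_weight: "0 \<le> lyapunov_weight \<omega> * \<beta>" "lyapunov_weight \<omega> * \<beta> \<le> 1/2"
proof -
  show "0 \<le> lyapunov_weight \<omega> * \<beta>" using lyapunov_weight(1)[OF \<omega>_pos] \<beta> by simp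
  have "lyapunov_weight \<omega> * \<beta> \<le> lyapunov_weight \<omega> * 1"
    using lyapunov_weight(1)[OF \<omega>_pos] \<beta> by (intro mult_left_mono) auto
  then show "lyapunov_weight \<omega> * \<beta> \<le> 1/2" using lyapunov_weight(4)[OF \<omega>_pos] by simp
qed

lemma V_bounds: "(norm y)^2 / 2 \<le> V y" "V y \<le> 3 * (norm y)^2 / 2"
  using lyapunov_bounds[OF V_weight] by auto

lemma norm_le_of_V_le:
  assumes "V y \<le> 3 * R^2 / 2" "0 \<le> R"
  shows "norm y \<le> 2 * R"
proof (rule power2_le_imp_le)
  have "(norm y)^2 \<le> 3 * R^2" using V_bounds(1)[of y] assms(1) by simp
  also have "\<dots> \<le> (2 * R)^2" by (simp add: power_mult_distrib)
  finally show "(norm y)^2 \<le> (2 * R)^2" .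
qed (use assms in simp)

lemma continuous_on_V_solution:
  assumes "is_solution f e x"
  shows "continuous_on {0..} (\<lambda>t. V (x t))"
  using assms continuous_on_compose2[OF continuous_on_lyapunov[of UNIV]]
  by (auto simp: is_solution_def)

lemma V_upper_right_dini:
  assumes sol: "is_solution f e x" and "0 \<le> u" and e_le: "\<And>s. u \<le> s \<Longrightarrow> norm (e s) \<le> \<delta>"
  shows "upper_right_dini_le (\<lambda>t. V (x t)) u
           (- decay_rate \<omega> * \<beta> * (norm (x u))^2 / rho (x u) + 3 * norm (x u) * \<delta>)"
proof (rule solution_upper_right_dini[OF sol f_cont \<open>0 \<le> u\<close> e_le lyapunov_has_derivative])
  fix v :: "real^2" assume "norm v \<le> \<delta>"
  let ?D = "lyapunov_deriv (lyapunov_weight \<omega> * \<beta>) (x u)"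
  have "linear ?D" using lyapunov_has_derivative by (rule has_derivative_linear)
  then have "?D (f (x u) + v) = ?D (f (x u)) + ?D v" by (rule linear_add)
  also have "\<dots> \<le> - decay_rate \<omega> * \<beta> * (norm (x u))^2 / rho (x u) + 3 * norm (x u) * \<delta>"
  proof (rule add_mono)
    show "?D (f (x u)) \<le> - decay_rate \<omega> * \<beta> * (norm (x u))^2 / rho (x u)"
      using lyapunov_deriv_damped_rotation_le[OF \<omega>_pos \<beta> \<psi> lyapunov_weight(1-3)[OF \<omega>_pos] f_nth]
      by (simp add: decay_rate_def)
    have "?D v \<le> 3 * norm (x u) * norm v" using abs_lyapunov_deriv_le[OF V_weight] by (rule abs_le_D1)
    also have "\<dots> \<le> 3 * norm (x u) * \<delta>" using \<open>norm v \<le> \<delta>\<close> by (simp add: mult_left_mono)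
    finally show "?D v \<le> 3 * norm (x u) * \<delta>" .
  qed
  finally show "?D (f (x u) + v) \<le> - decay_rate \<omega> * \<beta> * (norm (x u))^2 / rho (x u) + 3 * norm (x u) * \<delta>" .
qed

lemma V_upper_right_dini_outside_ball:
  assumes sol: "is_solution f e x" and "0 \<le> u" and e_le: "\<And>s. u \<le> s \<Longrightarrow> norm (e s) \<le> \<delta>"
    and "0 < \<delta>" and P: "12 * \<delta> \<le> P" "P = decay_rate \<omega> * \<beta>" and R: "12 * \<delta> / P \<le> norm (x u)"
  shows "upper_right_dini_le (\<lambda>t. V (x t)) u (- (3 * \<delta> * (12 * \<delta> / P)))"
proof (rule upper_right_dini_le_mono[OF V_upper_right_dini[OF sol \<open>0 \<le> u\<close> e_le]])
  define n where "n = norm (x u)"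
  have "P > 0" using P \<open>0 < \<delta>\<close> by linarith
  then have "12 * \<delta> \<le> P * n"
    using mult_left_mono[OF R, of P] by (simp add: n_def)
  from dissipation_dominates_perturbation[OF \<open>0 < \<delta>\<close> P(1) this _ rho_pos]
  have "- P * n^2 / rho (x u) + 3 * n * \<delta> \<le> - 3 * \<delta> * n"
    by (simp add: n_def rho_eq_norm)
  also have "\<dots> \<le> - (3 * \<delta> * (12 * \<delta> / P))"
    using mult_left_mono[OF R, of "3 * \<delta>"] \<open>0 < \<delta>\<close> by (simp add: n_def)
  finally show "- decay_rate \<omega> * \<beta> * (norm (x u))^2 / rho (x u) + 3 * norm (x u) * \<delta>
      \<le> - (3 * \<delta> * (12 * \<delta> / P))"
    by (simp add: P(2) n_def)
qed

lemma solution_eventually_bounded: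
  assumes "0 < \<delta>" "\<delta> \<le> \<beta> * (decay_rate \<omega> / 12)" and "eventually_bounded e \<delta>"
    and sol: "is_solution f e x"
  shows "eventually_bounded x (24 / decay_rate \<omega> / \<beta> * \<delta>)"
proof -
  obtain T where "T > 0" and e_le: "\<And>t. T \<le> t \<Longrightarrow> norm (e t) \<le> \<delta>"
    using assms(3) by (auto simp: eventually_bounded_def)
  define P where "P = decay_rate \<omega> * \<beta>"
  have "P > 0" using decay_rate_pos[OF \<omega>_pos] \<beta> by (simp add: P_def)
  have "12 * \<delta> \<le> P" using assms(2) unfolding P_def by (simp add: mult.commute)
  define R where "R = 12 * \<delta> / P"
  have "R > 0" using \<open>0 < \<delta>\<close> \<open>P > 0\<close> by (simp add: R_def)
  text \<open>Outside the ball of radius \<open>R\<close> the dissipation wins, so \<open>V\<close> sinks below its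
    maximum \<open>3 R\<^sup>2 / 2\<close> on that ball and stays there.\<close>
  have "\<exists>t\<^sub>1\<ge>T. \<forall>t\<ge>t\<^sub>1. V (x t) \<le> 3 * R^2 / 2"
  proof (rule eventually_below_level)
    show "continuous_on {T..} (\<lambda>t. V (x t))"
      using continuous_on_V_solution[OF sol] by (rule continuous_on_subset) (use \<open>T > 0\<close> in auto)
    show "0 \<le> V (x t)" for t using V_bounds(1)[of "x t"] zero_le_power2[of "norm (x t)"] by linarith
    show "0 < 3 * \<delta> * R" using \<open>0 < \<delta>\<close> \<open>R > 0\<close> by simp
    fix u assume "T \<le> u" and above: "3 * R^2 / 2 \<le> V (x u)"
    then have "R^2 \<le> (norm (x u))^2" using V_bounds(2)[of "x u"] by simp
    then have "R \<le> norm (x u)" by (rule power2_le_imp_le) simp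
    with \<open>T \<le> u\<close> \<open>T > 0\<close> e_le \<open>0 < \<delta>\<close> \<open>12 * \<delta> \<le> P\<close>
    show "upper_right_dini_le (\<lambda>t. V (x t)) u (- (3 * \<delta> * R))"
      unfolding R_def by (intro V_upper_right_dini_outside_ball[OF sol _ _ _ _ P_def]) auto
  qed
  then obtain t\<^sub>1 where "T \<le> t\<^sub>1" and below: "\<And>t. t\<^sub>1 \<le> t \<Longrightarrow> V (x t) \<le> 3 * R^2 / 2" by blast
  have "2 * R = 24 / decay_rate \<omega> / \<beta> * \<delta>" using \<open>P > 0\<close> by (simp add: R_def P_def field_simps)
  moreover have "norm (x t) \<le> 2 * R" if "t\<^sub>1 \<le> t" for t
    using below[OF that] \<open>R > 0\<close> by (intro norm_le_of_V_le) auto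
  ultimately show ?thesis
    unfolding eventually_bounded_def using \<open>T > 0\<close> \<open>T \<le> t\<^sub>1\<close> by (intro exI[of _ t\<^sub>1]) auto
qed

lemma solution_norm_le:
  assumes sol: "is_solution f (\<lambda>_. 0) x" and "0 \<le> t"
  shows "norm (x t) \<le> 2 * norm (x 0)"
proof -
  have "V (x t) \<le> V (x 0)"
  proof (rule upper_right_dini_barrier[OF \<open>0 \<le> t\<close>])
    show "continuous_on {0..t} (\<lambda>t. V (x t))"
      using continuous_on_V_solution[OF sol] by (rule continuous_on_subset) auto
    fix u :: real assume "0 \<le> u"
    have "- decay_rate \<omega> * \<beta> * (norm (x u))^2 / rho (x u) + 3 * norm (x u) * 0 \<le> 0"
      using decay_rate_pos[OF \<omega>_pos] \<beta> rho_pos[of "x u"] by simp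
    with V_upper_right_dini[OF sol \<open>0 \<le> u\<close>, of 0]
    show "upper_right_dini_le (\<lambda>t. V (x t)) u 0" by (auto intro: upper_right_dini_le_mono)
  qed simp
  then show ?thesis using V_bounds(2)[of "x 0"] by (intro norm_le_of_V_le) auto
qed

lemma lyap_stable: "lyap_stable f"
  unfolding lyap_stable_def
proof (intro conjI allI impI)
  show "f 0 = 0" by (simp add: vec_eq_iff forall_2 f_nth)
  fix \<epsilon> :: real assume "\<epsilon> > 0"
  then show "\<exists>\<delta>>0. \<forall>x. is_solution f (\<lambda>_. 0) x \<and> norm (x 0) < \<delta> \<longrightarrow> (\<forall>t\<ge>0. norm (x t) < \<epsilon>)"
    using solution_norm_le by (intro exI[of _ "\<epsilon> / 2"]) force
qed

lemma solution_tendsto_zero: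
  assumes sol: "is_solution f (\<lambda>_. 0) x"
  shows "(x \<longlongrightarrow> 0) at_top"
proof (rule tendstoI)
  fix \<epsilon> :: real assume "\<epsilon> > 0"
  define N where "N = 24 / decay_rate \<omega> / \<beta>"
  have "N > 0" using decay_rate_pos[OF \<omega>_pos] \<beta> by (simp add: N_def)
  define \<delta> where "\<delta> = min (\<beta> * (decay_rate \<omega> / 12)) (\<epsilon> / (2 * N))"
  have "0 < \<delta>" using \<beta> decay_rate_pos[OF \<omega>_pos] \<open>\<epsilon> > 0\<close> \<open>N > 0\<close> by (simp add: \<delta>_def)
  then have "eventually_bounded (\<lambda>_. 0 :: real^2) \<delta>"
    unfolding eventually_bounded_def by (intro exI[of _ 1]) auto
  moreover have "\<delta> \<le> \<beta> * (decay_rate \<omega> / 12)" by (simp add: \<delta>_def)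
  ultimately have "eventually_bounded x (N * \<delta>)"
    using solution_eventually_bounded[OF \<open>0 < \<delta>\<close> _ _ sol] by (simp add: N_def)
  then obtain T where "\<And>t. T \<le> t \<Longrightarrow> norm (x t) \<le> N * \<delta>"
    unfolding eventually_bounded_def by blast
  have "\<delta> \<le> \<epsilon> / (2 * N)" by (simp add: \<delta>_def)
  then have "N * \<delta> \<le> N * (\<epsilon> / (2 * N))" using \<open>N > 0\<close> by (intro mult_left_mono) auto
  also have "\<dots> < \<epsilon>" using \<open>N > 0\<close> \<open>\<epsilon> > 0\<close> by simp
  finally have "N * \<delta> < \<epsilon>" .
  show "\<forall>\<^sub>F t in at_top. dist (x t) 0 < \<epsilon>"
    unfolding eventually_at_top_linorder
  proof (intro exI allI impI)
    fix t assume "T \<le> t"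
    with \<open>\<And>t. T \<le> t \<Longrightarrow> norm (x t) \<le> N * \<delta>\<close> \<open>N * \<delta> < \<epsilon>\<close> show "dist (x t) 0 < \<epsilon>" by fastforce
  qed
qed

lemma glob_asym_stable: "glob_asym_stable f"
  unfolding glob_asym_stable_def using lyap_stable solution_tendsto_zero by blast

lemma asym_stable: "asym_stable f"
  unfolding asym_stable_def using lyap_stable solution_tendsto_zero by (intro conjI exI[of _ 1]) auto

lemma SISS_L: "SISS_L (\<beta> * (decay_rate \<omega> / 12)) (24 / decay_rate \<omega> / \<beta>) f"
  unfolding SISS_L_def using solution_eventually_bounded by blast

end

lemma A0_mult_nth: "(A0 *v y) $ 1 = y$2" "(A0 *v y) $ 2 = - y$1"
  by (simp_all add: matrix_vector_mul_component A0_def inner_vec_def sum_2)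

lemma b0_nth: "b0 $ 1 = 0" "b0 $ 2 = 1"
  by (simp_all add: b0_def)

lemma inner_b0: "b0 \<bullet> y = y$2"
  by (simp add: b0_def inner_vec_def sum_2)

definition sys_linearization :: "real \<Rightarrow> real \<Rightarrow> real^2 \<Rightarrow> real^2" where
  "sys_linearization \<omega> \<beta> h = \<omega> *\<^sub>R (A0 *v h) - (\<beta> * (b0 \<bullet> h)) *\<^sub>R b0"

lemma sys_has_derivative_at_0: "(sys \<omega> \<beta> has_derivative sys_linearization \<omega> \<beta>) (at 0)"
proof -
  have "sys \<omega> \<beta> = (\<lambda>y. \<omega> *\<^sub>R (A0 *v y) - \<beta> *\<^sub>R ((b0 \<bullet> y) / sqrt (1 + y \<bullet> y)) *\<^sub>R b0)"
    by (simp add: sys_def[abs_def] power2_norm_eq_inner)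
  then show ?thesis
    unfolding sys_linearization_def[abs_def]
    by simp (rule derivative_eq_intros refl
        matrix_vector_mul_bounded_linear[THEN bounded_linear.has_derivative] | simp)+
qed

lemma damped_rotation_sys:
  assumes "\<omega> > 0" "0 < \<beta>" "\<beta> \<le> 1"
  shows "damped_rotation \<omega> \<beta> (\<lambda>y. 1 / rho y) (sys \<omega> \<beta>)"
proof
  show "1 / rho y \<le> 1" for y using rho_ge_1[of y] by simp
  show "sys \<omega> \<beta> y $ 1 = \<omega> * y$2" "sys \<omega> \<beta> y $ 2 = - \<omega> * y$1 - \<beta> * (1 / rho y) * y$2" for y
    by (simp_all add: sys_def A0_mult_nth b0_nth inner_b0 rho_eq_norm)
  have "0 < 1 + (norm y)^2" for y :: "real^2" by (simp add: add_pos_nonneg)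
  then show "continuous_on UNIV (sys \<omega> \<beta>)"
    unfolding sys_def[abs_def] by (intro continuous_intros) (metis real_sqrt_gt_zero less_irrefl)
qed (use assms in simp_all)

lemma damped_rotation_linearization:
  assumes "\<omega> > 0" "0 < \<beta>" "\<beta> \<le> 1"
  shows "damped_rotation \<omega> \<beta> (\<lambda>_. 1) (sys_linearization \<omega> \<beta>)"
proof
  show "1 / rho y \<le> 1" for y using rho_ge_1[of y] by simp
  show "sys_linearization \<omega> \<beta> y $ 1 = \<omega> * y$2"
    "sys_linearization \<omega> \<beta> y $ 2 = - \<omega> * y$1 - \<beta> * 1 * y$2" for y
    by (simp_all add: sys_linearization_def A0_mult_nth b0_nth inner_b0)
  show "continuous_on UNIV (sys_linearization \<omega> \<beta>)"
    unfolding sys_linearization_def[abs_def] by (intro continuous_intros)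
qed (use assms in simp_all)

theorem lemma3:
  fixes \<omega> :: real
  assumes "\<omega> > 0"
  shows "\<exists>\<Gamma>>0. \<exists>N>0. \<forall>\<beta>. 0 < \<beta> \<and> \<beta> \<le> 1 \<longrightarrow>
           SISS_L (\<beta> * \<Gamma>) (N / \<beta>) (sys \<omega> \<beta>) \<and>
           glob_asym_stable (sys \<omega> \<beta>) \<and>
           (\<exists>L. (sys \<omega> \<beta> has_derivative L) (at 0) \<and> asym_stable L)"
proof -
  have "decay_rate \<omega> / 12 > 0" "24 / decay_rate \<omega> > 0"
    using decay_rate_pos[OF assms] by simp_all
  moreover have "SISS_L (\<beta> * (decay_rate \<omega> / 12)) (24 / decay_rate \<omega> / \<beta>) (sys \<omega> \<beta>) \<and>
      glob_asym_stable (sys \<omega> \<beta>) \<and> (\<exists>L. (sys \<omega> \<beta> has_derivative L) (at 0) \<and> asym_stable L)"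
    if "0 < \<beta> \<and> \<beta> \<le> 1" for \<beta>
  proof -
    have nonlinear: "damped_rotation \<omega> \<beta> (\<lambda>y. 1 / rho y) (sys \<omega> \<beta>)"
      and linear: "damped_rotation \<omega> \<beta> (\<lambda>_. 1) (sys_linearization \<omega> \<beta>)"
      using damped_rotation_sys damped_rotation_linearization assms that by auto
    then show ?thesis
      using damped_rotation.SISS_L damped_rotation.glob_asym_stable damped_rotation.asym_stable
        sys_has_derivative_at_0 by blast
  qed
  ultimately show ?thesis by blast
qed

end
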